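(* Consider the two-armed Gaussian bandit with two candidate models described in the context, under disagreement $\phi(\nu)=1$, $\phi(\gamma)=2$, with $\Delta_1>0>\Delta_2$. Then the pairs $(1,\delta_\nu)$ and $(2,\delta_\gamma)$ are strict Berk–Nash equilibria: for each pair $(a^*,\mu^* )$, the action $a^*$ is the unique maximizer of $\sum_{\theta}\mu^*(\theta)\theta_a$ over $a\in\{1,2\}$, and $\mu^*$ assigns probability one to the unique minimizer over $\theta\in\{\nu,\gamma\}$ of $\mathrm{KL}\big(g(\cdot\mid a^* )\,\|\,f_\theta(\cdot\mid a^* )\big)$.
   Context: Actions are $\mathcal A=\{1,2\}$. True environment: $R\mid A=i\sim g(\cdot\mid i)=\mathcal N(g(i),1)$. Two candidate models $\nu=(\nu_1,\nu_2)$, $\gamma=(\gamma_1,\gamma_2)\in\mathbb R^2$; under model $\theta$, $R\mid A=i\sim f_\theta(\cdot\mid i)=\mathcal N(\theta_i,1)$; $\phi(\theta)=\arg\max_i\theta_i$ (assumed unique). $\Delta_i:=\mathbb E_{R\sim g(\cdot\mid i)}[\log f_\nu(R\mid i)-\log f_\gamma(R\mid i)]=\mathrm{KL}(g(\cdot\mid i)\|f_\gamma(\cdot\mid i))-\mathrm{KL}(g(\cdot\mid i)\|f_\nu(\cdot\mid i))$. $\delta_\theta$ denotes the point-mass belief on model $\theta$. *)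

theory Defs
  imports "HOL-Probability.Probability"
begin

text \<open>Actions are 1 and 2 (type nat). A model theta assigns a mean reward
theta i to action i; under model theta, R | A = i ~ N(theta i, 1).
The true environment g likewise gives R | A = i ~ N(g i, 1).\<close>

definition actions :: "nat set" where
  "actions = {1, 2}"

definition phi :: "(nat \<Rightarrow> real) \<Rightarrow> nat" where
  "phi \<theta> = (THE i. i \<in> actions \<and> (\<forall>j\<in>actions. j \<noteq> i \<longrightarrow> \<theta> j < \<theta> i))"

definition gauss_KL :: "real \<Rightarrow> real \<Rightarrow> real" where
  "gauss_KL m t = (LINT r|lborel. normal_density m 1 r * ln (normal_density m 1 r / normal_density t 1 r))"

definition KL_act :: "(nat \<Rightarrow> real) \<Rightarrow> (nat \<Rightarrow> real) \<Rightarrow> nat \<Rightarrow> real" where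
  "KL_act g \<theta> a = gauss_KL (g a) (\<theta> a)"

definition Delta :: "(nat \<Rightarrow> real) \<Rightarrow> (nat \<Rightarrow> real) \<Rightarrow> (nat \<Rightarrow> real) \<Rightarrow> nat \<Rightarrow> real" where
  "Delta g \<nu> \<gamma> i = (LINT r|lborel. normal_density (g i) 1 r *
      (ln (normal_density (\<nu> i) 1 r) - ln (normal_density (\<gamma> i) 1 r)))"

definition strict_BNE ::
  "(nat \<Rightarrow> real) \<Rightarrow> (nat \<Rightarrow> real) set \<Rightarrow> nat \<Rightarrow> (nat \<Rightarrow> real) pmf \<Rightarrow> bool" where
  "strict_BNE g M a \<mu> \<longleftrightarrow>
     a \<in> actions \<and>
     (\<forall>b\<in>actions. b \<noteq> a \<longrightarrow>
        measure_pmf.expectation \<mu> (\<lambda>\<theta>. \<theta> b) < measure_pmf.expectation \<mu> (\<lambda>\<theta>. \<theta> a)) \<and>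
     (\<exists>\<theta>0\<in>M. (\<forall>\<theta>\<in>M. \<theta> \<noteq> \<theta>0 \<longrightarrow> KL_act g \<theta>0 a < KL_act g \<theta> a) \<and>
              measure_pmf.prob \<mu> {\<theta>0} = 1)"

end

theory Submission
  imports Defs
begin

text \<open>For Gaussians of equal variance the log-likelihood ratio is affine in the observation,
so its expectation under any Gaussian is obtained by evaluating it at that Gaussian's mean.
This gives KL(N(m,1) || N(t,1)) = (m - t)^2/2 and identifies Delta_i as the difference of
the two KL divergences at action i. The hypotheses on Delta thus say that nu fits the data of
action 1 strictly better and gamma those of action 2; together with phi, each point mass is
then self-confirming and its favourite action is the strict best response.\<close>

lemma ln_normal_density:
  assumes "\<sigma> \<noteq> 0"
  shows "ln (normal_density \<mu> \<sigma> x) = - ln (sqrt (2 * pi * \<sigma>\<^sup>2)) - (x - \<mu>)\<^sup>2 / (2 * \<sigma>\<^sup>2)"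
  using assms unfolding normal_density_def by (simp add: ln_div ln_mult)

lemma ln_normal_density_diff:
  assumes "\<sigma> \<noteq> 0"
  shows "ln (normal_density \<mu> \<sigma> x) - ln (normal_density t \<sigma> x)
           = (t\<^sup>2 - \<mu>\<^sup>2) / (2 * \<sigma>\<^sup>2) + (\<mu> - t) / \<sigma>\<^sup>2 * x"
  using assms by (simp add: ln_normal_density power2_eq_square field_simps)

lemma integral_normal_density_affine:
  assumes "0 < \<sigma>"
  shows "(LINT x|lborel. normal_density m \<sigma> x * (a + b * x)) = a + b * m"
proof -
  have "has_bochner_integral lborel (normal_density m \<sigma>) 1"
    using assms has_bochner_integral_integrable[OF integrable_normal_density] by simp
  then have "has_bochner_integral lborel
               (\<lambda>x. a * normal_density m \<sigma> x + b * (normal_density m \<sigma> x * x)) (a * 1 + b * m)"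
    using assms by (intro has_bochner_integral_add has_bochner_integral_mult_right normal_moment_nz_1)
  then show ?thesis
    by (simp add: has_bochner_integral_integral_eq algebra_simps)
qed

lemma integral_normal_density_ln_diff:
  assumes "0 < \<sigma>"
  shows "(LINT x|lborel. normal_density m \<sigma> x * (ln (normal_density \<mu> \<sigma> x) - ln (normal_density t \<sigma> x)))
           = ((m - t)\<^sup>2 - (m - \<mu>)\<^sup>2) / (2 * \<sigma>\<^sup>2)"
proof -
  have "(LINT x|lborel. normal_density m \<sigma> x * (ln (normal_density \<mu> \<sigma> x) - ln (normal_density t \<sigma> x)))
          = (t\<^sup>2 - \<mu>\<^sup>2) / (2 * \<sigma>\<^sup>2) + (\<mu> - t) / \<sigma>\<^sup>2 * m"
    using assms by (simp only: ln_normal_density_diff integral_normal_density_affine less_irrefl)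
  also have "\<dots> = ((m - t)\<^sup>2 - (m - \<mu>)\<^sup>2) / (2 * \<sigma>\<^sup>2)"
    using assms by (simp add: power2_eq_square field_simps)
  finally show ?thesis .
qed

lemma gauss_KL_eq: "gauss_KL m t = (m - t)\<^sup>2 / 2"
proof -
  have "gauss_KL m t
          = (LINT x|lborel. normal_density m 1 x * (ln (normal_density m 1 x) - ln (normal_density t 1 x)))"
    unfolding gauss_KL_def
    by (intro Bochner_Integration.integral_cong)
      (simp_all add: ln_div normal_density_pos[THEN less_imp_neq, THEN not_sym])
  then show ?thesis
    by (simp add: integral_normal_density_ln_diff)
qed

lemma Delta_eq_KL_act_diff: "Delta g \<nu> \<gamma> i = KL_act g \<gamma> i - KL_act g \<nu> i"
  by (simp add: Delta_def KL_act_def gauss_KL_eq integral_normal_density_ln_diff diff_divide_distrib)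

lemma phi_two_actions:
  assumes "\<theta> 1 \<noteq> \<theta> 2"
  shows "phi \<theta> = (if \<theta> 2 < \<theta> 1 then 1 else 2)"
  unfolding phi_def by (rule the_equality) (use assms in \<open>auto simp: actions_def\<close>)

lemma strict_BNE_return_pmfI:
  assumes "a \<in> actions" and "\<And>b. b \<in> actions \<Longrightarrow> b \<noteq> a \<Longrightarrow> \<theta>\<^sub>0 b < \<theta>\<^sub>0 a"
    and "\<theta>\<^sub>0 \<in> M" and "\<And>\<theta>. \<theta> \<in> M \<Longrightarrow> \<theta> \<noteq> \<theta>\<^sub>0 \<Longrightarrow> KL_act g \<theta>\<^sub>0 a < KL_act g \<theta> a"
  shows "strict_BNE g M a (return_pmf \<theta>\<^sub>0)"
  unfolding strict_BNE_def using assms by (auto simp: measure_return intro!: bexI[of _ \<theta>\<^sub>0])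

theorem corollary1:
  fixes g \<nu> \<gamma> :: "nat \<Rightarrow> real"
  assumes "\<nu> 1 \<noteq> \<nu> 2" and "\<gamma> 1 \<noteq> \<gamma> 2"
    and "phi \<nu> = 1" and "phi \<gamma> = 2"
    and "Delta g \<nu> \<gamma> 1 > 0" and "Delta g \<nu> \<gamma> 2 < 0"
  shows "strict_BNE g {\<nu>, \<gamma>} 1 (return_pmf \<nu>) \<and> strict_BNE g {\<nu>, \<gamma>} 2 (return_pmf \<gamma>)"
proof -
  have "\<nu> 2 < \<nu> 1"
    using assms(3) phi_two_actions[OF assms(1)] by (cases "\<nu> 2 < \<nu> 1") simp_all
  moreover have "\<gamma> 1 < \<gamma> 2"
    using assms(2,4) phi_two_actions[OF assms(2)] by (cases "\<gamma> 2 < \<gamma> 1") simp_all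
  moreover have "KL_act g \<nu> 1 < KL_act g \<gamma> 1" "KL_act g \<gamma> 2 < KL_act g \<nu> 2"
    using assms(5,6) by (simp_all add: Delta_eq_KL_act_diff)
  ultimately show ?thesis
    by (auto intro!: strict_BNE_return_pmfI simp: actions_def)
qed

end
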